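(* For every ordered forest $\mathcal F$ let $S'^{\mathcal F}(A')$ be the sum of all $\mathcal F$-compatible words over $A'$ (in the sense below). Then for all ordered forests $\mathcal F,\mathcal G$, $S'^{\mathcal F}S'^{\mathcal G}=S'^{\mathcal F\mathcal G}$, and, letting letters of $A'$ commute with letters of $B'$, $$S'^{\mathcal F}(A'\oplus B')=\sum_{V}S'^{\mathrm{Roo}_V\mathcal F}(A')\,S'^{\mathrm{Lea}_V\mathcal F}(B'),$$ the sum over admissible cuts $V$ of $\mathcal F$. Hence $\mathcal F\mapsto S'^{\mathcal F}$ is compatible with the product and coproduct of $\mathbf H_o$.
   Context: An ordered forest on $n$ vertices ($n\ge 0$) is a rooted forest whose vertex set is $[n]=\{1,\dots,n\}$ with its natural total order (the labels need not be related to the tree structure); it is determined by its set of roots and the parent map $p$ on non-root vertices. A vertex $w$ is a descendant of $v$ if $v$ is obtained from $w$ by applying $p$ at least once. For $I\subseteq[n]$ with $|I|=k$, the restriction $\mathcal F_{|I}$ is the ordered forest on $[k]$ obtained by keeping the vertices in $I$ and the edges of $\mathcal F$ between two vertices of $I$ (a vertex of $I$ whose parent is not in $I$ becomes a root), relabelled via the unique increasing bijection $I\to[k]$. An admissible cut of $\mathcal F$ is a subset $V\subseteq[n]$ (possibly empty) containing no two distinct vertices one of which is a descendant of the other. For such $V$, let $L_V$ be the set of vertices lying in $V$ or descending from an element of $V$, and set $\mathrm{Lea}_V\mathcal F=\mathcal F_{|L_V}$, $\mathrm{Roo}_V\mathcal F=\mathcal F_{|[n]\setminus L_V}$. For ordered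 forests $\mathcal F$ on $[n]$ and $\mathcal G$ on $[m]$, $\mathcal F\mathcal G$ is the ordered forest on $[n+m]$ which is the disjoint union of $\mathcal F$ and of $\mathcal G$ with labels shifted by $n$. $\mathbf H_o$ is the vector space with basis the ordered forests, product extending $\mathcal F\mathcal G$, coproduct $\Delta(\mathcal F)=\sum_{V}\mathrm{Roo}_V\mathcal F\otimes\mathrm{Lea}_V\mathcal F$. Second realization: $A'=\{a_{ij}: 1\le i\le j\}$ with relation $a_{hi}\prec a_{ij}$ whenever $h\le i<j$ (and no other relations). A word $w=w_1\cdots w_n$ over $A'$ is $\mathcal F$-compatible if (a) for each root $k$ of $\mathcal F$, $w_k$ is a diagonal letter $a_{ii}$ for some $i$, and (b) $w_k\prec w_l$ whenever $k$ is the parent of $l$. With $B'=\{b_{ij}:1\le i\le j\}$ a disjoint copy of $A'$, $A'\oplus B'$ is the disjoint union with the relations of $A'$ and of $B'$, together with $a\prec b_{ii}$ for all $a\in A'$ and all $i\ge1$; $\mathcal F$-compatible words over $A'\oplus B'$ are defined by (a) (diagonal letters $a_{ii}$ or $b_{ii}$ at roots) and (b) with this extended relation. *)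

theory Defs
  imports Main
begin

text \<open>An ordered forest on [n] is represented as a pair (n, p) where p is the parent map:
  p k = None for roots and for all k outside {1..n}; p k = Some q with q the parent of k.\<close>

type_synonym oforest = "nat \<times> (nat \<Rightarrow> nat option)"

definition edges :: "(nat \<Rightarrow> nat option) \<Rightarrow> (nat \<times> nat) set" where
  "edges p = {(w, v). p w = Some v}"

definition descendant :: "oforest \<Rightarrow> nat \<Rightarrow> nat \<Rightarrow> bool" where
  "descendant F w v \<longleftrightarrow> (w, v) \<in> (edges (snd F))\<^sup>+"

definition wf_forest :: "oforest \<Rightarrow> bool" where
  "wf_forest F \<longleftrightarrow>
     (\<forall>k. k \<notin> {1..fst F} \<longrightarrow> snd F k = None) \<and>
     (\<forall>k q. snd F k = Some q \<longrightarrow> q \<in> {1..fst F}) \<and>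
     (\<forall>k. \<not> descendant F k k)"

text \<open>Increasing bijection I -> [card I]: rank, and its inverse.\<close>
definition rank :: "nat set \<Rightarrow> nat \<Rightarrow> nat" where
  "rank I q = card {x \<in> I. x \<le> q}"

definition elem_at :: "nat set \<Rightarrow> nat \<Rightarrow> nat" where
  "elem_at I j = sorted_list_of_set I ! (j - 1)"

definition restr :: "oforest \<Rightarrow> nat set \<Rightarrow> oforest" where
  "restr F I = (card I, (\<lambda>j. if 1 \<le> j \<and> j \<le> card I then
       (case snd F (elem_at I j) of
          None \<Rightarrow> None
        | Some q \<Rightarrow> if q \<in> I then Some (rank I q) else None)
     else None))"

definition admissible_cut :: "oforest \<Rightarrow> nat set \<Rightarrow> bool" where
  "admissible_cut F V \<longleftrightarrow> V \<subseteq> {1..fst F} \<and>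
     (\<forall>v\<in>V. \<forall>w\<in>V. v \<noteq> w \<longrightarrow> \<not> descendant F w v)"

definition LV :: "oforest \<Rightarrow> nat set \<Rightarrow> nat set" where
  "LV F V = V \<union> {w. \<exists>v\<in>V. descendant F w v}"

definition Lea :: "oforest \<Rightarrow> nat set \<Rightarrow> oforest" where
  "Lea F V = restr F (LV F V)"

definition Roo :: "oforest \<Rightarrow> nat set \<Rightarrow> oforest" where
  "Roo F V = restr F ({1..fst F} - LV F V)"

definition fprod :: "oforest \<Rightarrow> oforest \<Rightarrow> oforest" where
  "fprod F G = (fst F + fst G,
     (\<lambda>k. if k \<le> fst F then snd F k else map_option (\<lambda>x. x + fst F) (snd G (k - fst F))))"

text \<open>Alphabet A': letters a_ij = (i,j) with 1 <= i <= j.\<close>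
definition letterA :: "nat \<times> nat \<Rightarrow> bool" where
  "letterA x \<longleftrightarrow> 1 \<le> fst x \<and> fst x \<le> snd x"

definition diagA :: "nat \<times> nat \<Rightarrow> bool" where
  "diagA x \<longleftrightarrow> fst x = snd x"

definition precA :: "nat \<times> nat \<Rightarrow> nat \<times> nat \<Rightarrow> bool" where
  "precA x y \<longleftrightarrow> snd x = fst y \<and> fst x \<le> snd x \<and> fst y < snd y"

text \<open>A' (+) B': Inl = letters of A', Inr = letters of B'.\<close>
fun letterAB :: "(nat \<times> nat) + (nat \<times> nat) \<Rightarrow> bool" where
  "letterAB (Inl x) = letterA x"
| "letterAB (Inr x) = letterA x"

fun diagAB :: "(nat \<times> nat) + (nat \<times> nat) \<Rightarrow> bool" where
  "diagAB (Inl x) = diagA x"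
| "diagAB (Inr x) = diagA x"

fun precAB :: "(nat \<times> nat) + (nat \<times> nat) \<Rightarrow> (nat \<times> nat) + (nat \<times> nat) \<Rightarrow> bool" where
  "precAB (Inl x) (Inl y) = precA x y"
| "precAB (Inr x) (Inr y) = precA x y"
| "precAB (Inl x) (Inr y) = diagA y"
| "precAB (Inr x) (Inl y) = False"

text \<open>F-compatible words (positions 1..n correspond to list indices 0..n-1).\<close>
definition compatible ::
  "('l \<Rightarrow> bool) \<Rightarrow> ('l \<Rightarrow> bool) \<Rightarrow> ('l \<Rightarrow> 'l \<Rightarrow> bool) \<Rightarrow> oforest \<Rightarrow> 'l list \<Rightarrow> bool" where
  "compatible letter diag prec F w \<longleftrightarrow>
     length w = fst F \<and> (\<forall>x\<in>set w. letter x) \<and>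
     (\<forall>k\<in>{1..fst F}. snd F k = None \<longrightarrow> diag (w ! (k - 1))) \<and>
     (\<forall>k l. l \<in> {1..fst F} \<longrightarrow> snd F l = Some k \<longrightarrow> prec (w ! (k - 1)) (w ! (l - 1)))"

text \<open>Formal series in noncommuting variables: coefficient functions on words.\<close>
type_synonym 'l series = "'l list \<Rightarrow> nat"

definition ser_mult :: "'l series \<Rightarrow> 'l series \<Rightarrow> 'l series" where
  "ser_mult f g w = (\<Sum>k\<le>length w. f (take k w) * g (drop k w))"

definition SA :: "oforest \<Rightarrow> (nat \<times> nat) series" where
  "SA F w = (if compatible letterA diagA precA F w then 1 else 0)"

definition SAB :: "oforest \<Rightarrow> ((nat \<times> nat) + (nat \<times> nat)) series" where
  "SAB F w = (if compatible letterAB diagAB precAB F w then 1 else 0)"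

end

theory Submission
  imports Defs
begin

text \<open>
  A word w is F-compatible iff the labelling k |-> w!(k-1) of the vertices
  satisfies a local condition at every vertex (right letter, diagonal letter at a root, and
  parent-letter \<prec> child-letter); this is the predicate labels_ok below.  Both identities are
  then statements about how this local condition behaves under relabelling of vertices.

  Product: the vertices of FG are those of F followed by those of G shifted by |F|, and no
  edge joins the two parts, so a word is FG-compatible iff its first |F| letters are
  F-compatible and the rest G-compatible; in the concatenation product only the cut at
  position |F| survives.

  Coproduct: in an F-compatible word over A' \<oplus> B' the set P of positions carrying a
  B'-letter is closed under taking children (no A'-letter lies above a B'-letter), and the
  condition splits into compatibility of the A'-part with F restricted to the complement of P
  and of the B'-part with F restricted to P (a B'-letter under an A'-letter must be diagonal,
  exactly as at a root).  Child-closed sets P correspond bijectively to admissible cuts via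
  V |-> L_V, and shuffles of u and v correspond bijectively to their sets of B'-positions.
  Counting both sides through these bijections gives the coproduct formula.
\<close>

lemma rank_bounds:
  assumes "finite I" "k \<in> I"
  shows "1 \<le> rank I k" "rank I k \<le> card I"
proof -
  have "k \<in> {x \<in> I. x \<le> k}" using assms(2) by simp
  then have "{x \<in> I. x \<le> k} \<noteq> {}" by blast
  then show "1 \<le> rank I k" unfolding rank_def using assms(1)
    by (simp add: Suc_le_eq card_gt_0_iff)
  show "rank I k \<le> card I" unfolding rank_def using assms(1) by (intro card_mono) auto
qed

lemma rank_strict_mono:
  assumes "finite I" "x \<in> I" "y \<in> I" "x < y"
  shows "rank I x < rank I y"
proof -
  have "y \<notin> {z \<in> I. z \<le> x}" "y \<in> {z \<in> I. z \<le> y}" using assms(3,4) by auto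
  moreover have "{z \<in> I. z \<le> x} \<subseteq> {z \<in> I. z \<le> y}" using assms(4) by auto
  ultimately have "{z \<in> I. z \<le> x} \<subset> {z \<in> I. z \<le> y}" by blast
  then show ?thesis unfolding rank_def using assms(1) by (intro psubset_card_mono) auto
qed

lemma rank_image:
  assumes "finite I"
  shows "rank I ` I = {1..card I}"
proof -
  have "inj_on (rank I) I"
    using rank_strict_mono[OF assms] by (metis inj_onI linorder_neqE_nat less_irrefl)
  then have "card (rank I ` I) = card {1..card I}" by (simp add: card_image)
  moreover have "rank I ` I \<subseteq> {1..card I}" using rank_bounds[OF assms] by auto
  ultimately show ?thesis by (simp add: card_subset_eq)
qed

lemma elem_at_rank:
  assumes "finite I" "k \<in> I"
  shows "elem_at I (rank I k) = k"
proof -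
  define s where "s = sorted_list_of_set I"
  have s: "sorted_wrt (<) s" "set s = I" "distinct s" using assms(1) by (auto simp: s_def)
  obtain i where i: "i < length s" "s ! i = k" using s(2) assms(2) by (metis in_set_conv_nth)
  have le: "s ! j \<le> k \<longleftrightarrow> j \<le> i" if "j < length s" for j
    using s(1) i that unfolding sorted_wrt_iff_nth_less
    by (metis le_less linorder_not_less)
  have "{x \<in> I. x \<le> k} = set (take (Suc i) s)"
  proof (intro equalityI subsetI)
    fix x assume "x \<in> {x \<in> I. x \<le> k}"
    then obtain j where "j < length s" "x = s ! j" "s ! j \<le> k" using s(2) by (auto simp: in_set_conv_nth)
    then show "x \<in> set (take (Suc i) s)" using le by (auto simp: in_set_conv_nth)
  next
    fix x assume "x \<in> set (take (Suc i) s)"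
    then obtain j where "j \<le> i" "x = s ! j" using i by (auto simp: in_set_conv_nth less_Suc_eq_le)
    then show "x \<in> {x \<in> I. x \<le> k}" using le i s(2) by auto
  qed
  then have "rank I k = Suc i" unfolding rank_def using i s(3) by (simp add: distinct_card)
  then show ?thesis unfolding elem_at_def s_def[symmetric] using i by simp
qed

definition posset :: "('a \<Rightarrow> bool) \<Rightarrow> 'a list \<Rightarrow> nat set" where
  "posset Q w = {k. 1 \<le> k \<and> k \<le> length w \<and> Q (w ! (k - 1))}"

lemma posset_Suc: "posset Q w = Suc ` {j. j < length w \<and> Q (w ! j)}"
  unfolding posset_def by (auto intro!: image_eqI[where x = "_ - 1"])

lemma finite_posset [simp]: "finite (posset Q w)"
  unfolding posset_Suc by simp

lemma posset_subset: "posset Q w \<subseteq> {1..length w}"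
  by (auto simp: posset_def)

lemma posset_compl: "posset (\<lambda>x. \<not> Q x) w = {1..length w} - posset Q w"
  by (auto simp: posset_def)

lemma length_filter_posset: "length (filter Q w) = card (posset Q w)"
  by (simp add: posset_Suc card_image length_filter_conv_card)

lemma nth_filter_posset:
  assumes "k \<in> posset Q w"
  shows "filter Q w ! (rank (posset Q w) k - 1) = w ! (k - 1)"
proof -
  define i where "i = k - 1"
  have k: "k = Suc i" "i < length w" "Q (w ! i)" using assms by (auto simp: posset_def i_def)
  have "{x \<in> posset Q w. x \<le> k} = Suc ` ({j. j < i \<and> Q (w ! j)} \<union> {i})"
    unfolding posset_Suc using k by auto
  moreover have "card (Suc ` ({j. j < i \<and> Q (w ! j)} \<union> {i})) = Suc (card {j. j < i \<and> Q (w ! j)})"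
    by (subst card_image) (auto simp: card_insert_disjoint)
  ultimately have "rank (posset Q w) k = Suc (length (filter Q (take i w)))"
    unfolding rank_def length_filter_conv_card using k by (simp add: min_def cong: conj_cong)
  moreover have "filter Q w = filter Q (take i w) @ w ! i # filter Q (drop (Suc i) w)"
    using k by (metis filter.simps(2) filter_append id_take_nth_drop)
  ultimately show ?thesis using k by (simp add: nth_append)
qed

lemma filter_eqI:
  assumes "length z = card (posset Q w)"
    and "\<And>k. k \<in> posset Q w \<Longrightarrow> z ! (rank (posset Q w) k - 1) = w ! (k - 1)"
  shows "filter Q w = z"
proof (rule nth_equalityI)
  show "length (filter Q w) = length z" using assms(1) by (simp add: length_filter_posset)
  fix j assume "j < length (filter Q w)"
  then have "Suc j \<in> rank (posset Q w) ` posset Q w"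
    by (simp add: rank_image length_filter_posset)
  then obtain k where k: "k \<in> posset Q w" "Suc j = rank (posset Q w) k" by blast
  show "filter Q w ! j = z ! j"
    using nth_filter_posset[OF k(1)] assms(2)[OF k(1)] k(2) by (metis diff_Suc_1)
qed

lemma mem_shuffles_iff:
  "w \<in> shuffles (map Inl u) (map Inr v) \<longleftrightarrow>
     filter isl w = map Inl u \<and> filter (\<lambda>x. \<not> isl x) w = map Inr v"
proof -
  have "shuffles (map Inl u) (map Inr v) = partition isl -` {(map Inl u, map Inr v)}"
    by (rule inv_image_partition[symmetric]) auto
  then show ?thesis by (simp add: o_def)
qed

definition build :: "nat \<Rightarrow> nat set \<Rightarrow> 'a list \<Rightarrow> 'b list \<Rightarrow> ('a + 'b) list" where
  "build n P u v = map (\<lambda>k. if k \<in> P then Inr (v ! (rank P k - 1))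
      else Inl (u ! (rank ({1..n} - P) k - 1))) [1..<n+1]"

lemma length_build [simp]: "length (build n P u v) = n"
  by (simp add: build_def)

lemma nth_build:
  "k \<in> {1..n} \<Longrightarrow> build n P u v ! (k - 1) =
     (if k \<in> P then Inr (v ! (rank P k - 1)) else Inl (u ! (rank ({1..n} - P) k - 1)))"
  unfolding build_def by (subst nth_map) (auto simp del: upt_Suc)

lemma posset_build: "P \<subseteq> {1..n} \<Longrightarrow> posset (\<lambda>x. \<not> isl x) (build n P u v) = P"
  unfolding posset_def using nth_build[of _ n P u v] by (auto split: if_splits)

lemma build_in_shuffles:
  assumes P: "P \<subseteq> {1..n}" and lu: "length u = card ({1..n} - P)" and lv: "length v = card P"
  shows "build n P u v \<in> shuffles (map Inl u) (map Inr v)"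
proof -
  have pr: "posset (\<lambda>x. \<not> isl x) (build n P u v) = P" by (rule posset_build[OF P])
  then have pl: "posset isl (build n P u v) = {1..n} - P"
    using posset_compl[of "\<lambda>x. \<not> isl x" "build n P u v"] by simp
  have "finite P" using P finite_subset by blast
  have "filter isl (build n P u v) = map Inl u"
  proof (rule filter_eqI)
    fix k assume "k \<in> posset isl (build n P u v)"
    then have k: "k \<in> {1..n} - P" using pl by simp
    show "map Inl u ! (rank (posset isl (build n P u v)) k - 1) = build n P u v ! (k - 1)"
      using nth_build[of k n P u v] rank_bounds[OF _ k] k lu by (simp add: pl)
  qed (simp add: pl lu)
  moreover have "filter (\<lambda>x. \<not> isl x) (build n P u v) = map Inr v"
  proof (rule filter_eqI)
    fix k assume "k \<in> posset (\<lambda>x. \<not> isl x) (build n P u v)"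
    then have k: "k \<in> P" using pr by simp
    show "map Inr v ! (rank (posset (\<lambda>x. \<not> isl x) (build n P u v)) k - 1) = build n P u v ! (k - 1)"
      using nth_build[of k n P u v] rank_bounds[OF \<open>finite P\<close> k] k lv P by (auto simp: pr)
  qed (simp add: pr lv)
  ultimately show ?thesis by (simp add: mem_shuffles_iff)
qed

lemma shuffle_lengths:
  assumes "w \<in> shuffles (map Inl u) (map Inr v)"
  shows "length u = card ({1..length w} - posset (\<lambda>x. \<not> isl x) w)"
    "length v = card (posset (\<lambda>x. \<not> isl x) w)"
  using assms length_filter_posset[of isl w] length_filter_posset[of "\<lambda>x. \<not> isl x" w]
    posset_compl[of "\<lambda>x. \<not> isl x" w] by (auto simp: mem_shuffles_iff)

lemma nth_shuffle:
  assumes w: "w \<in> shuffles (map Inl u) (map Inr v)" and k: "k \<in> {1..length w}"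
  defines "P \<equiv> posset (\<lambda>x. \<not> isl x) w"
  shows "w ! (k - 1) = (if k \<in> P then Inr (v ! (rank P k - 1))
                        else Inl (u ! (rank ({1..length w} - P) k - 1)))"
proof -
  have fl: "filter isl w = map Inl u" and fr: "filter (\<lambda>x. \<not> isl x) w = map Inr v"
    using w by (simp_all add: mem_shuffles_iff)
  have C: "posset isl w = {1..length w} - P"
    using posset_compl[of "\<lambda>x. \<not> isl x" w] by (simp add: P_def)
  show ?thesis
  proof (cases "k \<in> P")
    case True
    then have "rank P k - 1 < length v"
      using rank_bounds[of P k] shuffle_lengths(2)[OF w] by (simp add: P_def)
    then show ?thesis using nth_filter_posset[of k "\<lambda>x. \<not> isl x" w] True fr by (simp add: P_def)
  next
    case False
    then have kC: "k \<in> posset isl w" using C k by simp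
    then have "rank (posset isl w) k - 1 < length u"
      using rank_bounds[OF finite_posset kC] length_filter_posset[of isl w] fl by simp
    then show ?thesis using nth_filter_posset[OF kC] False fl C by simp
  qed
qed

lemma shuffle_eq_build:
  assumes "w \<in> shuffles (map Inl u) (map Inr v)"
  shows "w = build (length w) (posset (\<lambda>x. \<not> isl x) w) u v"
  by (rule nth_equalityI) (simp_all add: nth_build[where k = "Suc _", simplified]
      nth_shuffle[OF assms, where k = "Suc _", simplified])

lemma wf_parent:
  assumes "wf_forest F" "snd F k = Some q"
  shows "k \<in> {1..fst F}" "q \<in> {1..fst F}"
  using assms unfolding wf_forest_def by (metis option.distinct(1))+

lemma descendant_parent: "snd F w = Some v \<Longrightarrow> descendant F w v"
  unfolding descendant_def edges_def by auto

lemma descendant_trans: "descendant F a b \<Longrightarrow> descendant F b c \<Longrightarrow> descendant F a c"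
  unfolding descendant_def by (rule trancl_trans)

lemma descendant_cases:
  assumes "descendant F w v"
  obtains q where "snd F w = Some q" "q = v \<or> descendant F q v"
proof -
  obtain q where "(w, q) \<in> edges (snd F)" "(q, v) \<in> (edges (snd F))\<^sup>*"
    using assms unfolding descendant_def by (meson tranclD)
  then show thesis using that by (auto simp: edges_def descendant_def rtrancl_eq_or_trancl)
qed

lemma parent_relation_wf:
  assumes "wf_forest F"
  shows "wf ((edges (snd F))\<inverse>)"
proof -
  have "edges (snd F) \<subseteq> {1..fst F} \<times> {1..fst F}"
    using wf_parent[OF assms] by (auto simp: edges_def)
  then have "finite (edges (snd F))" by (rule finite_subset) simp
  moreover have "acyclic (edges (snd F))"
    using assms unfolding wf_forest_def acyclic_def descendant_def by blast
  ultimately show ?thesis by (intro finite_acyclic_wf) auto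
qed

text \<open>Sets of vertices containing, with every vertex, all its children (hence all its
  descendants).  These are exactly the sets L_V of admissible cuts V.\<close>

definition child_closed :: "oforest \<Rightarrow> nat set \<Rightarrow> bool" where
  "child_closed F P \<longleftrightarrow> P \<subseteq> {1..fst F} \<and> (\<forall>l k. snd F l = Some k \<longrightarrow> k \<in> P \<longrightarrow> l \<in> P)"

lemma child_closed_descendant:
  assumes "child_closed F P" "descendant F w v" "v \<in> P"
  shows "w \<in> P"
proof -
  have "(w, v) \<in> (edges (snd F))\<^sup>+" using assms(2) by (simp add: descendant_def)
  then show ?thesis
  proof (induction rule: converse_trancl_induct)
    case (base y)
    then show ?case using assms(1,3) unfolding child_closed_def edges_def by blast
  next
    case (step y z)
    then show ?case using assms(1) unfolding child_closed_def edges_def by blast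
  qed
qed

lemma LV_child_closed:
  assumes "wf_forest F" "admissible_cut F V"
  shows "child_closed F (LV F V)"
proof -
  have "w \<in> {1..fst F}" if "descendant F w v" for w v
    using that by (rule descendant_cases) (rule wf_parent(1)[OF assms(1)])
  moreover have "V \<subseteq> {1..fst F}" using assms(2) by (simp add: admissible_cut_def)
  ultimately have "LV F V \<subseteq> {1..fst F}" unfolding LV_def by blast
  moreover have "l \<in> LV F V" if "snd F l = Some k" "k \<in> LV F V" for l k
    using descendant_parent[OF that(1)] descendant_trans[of F l k] that(2) unfolding LV_def by blast
  ultimately show ?thesis by (simp add: child_closed_def)
qed

lemma cut_from_LV:
  assumes wf: "wf_forest F" and V: "admissible_cut F V"
  shows "V = {k \<in> LV F V. \<forall>x\<in>LV F V. \<not> descendant F k x}"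
proof (intro equalityI subsetI)
  fix k assume k: "k \<in> V"
  have "\<not> descendant F k x" if "x \<in> LV F V" for x
  proof
    assume d: "descendant F k x"
    from \<open>x \<in> LV F V\<close> obtain v where "v \<in> V" "x = v \<or> descendant F x v"
      unfolding LV_def by blast
    then have "v \<in> V" "descendant F k v" using d descendant_trans[of F k x v] by blast+
    moreover have "\<not> descendant F k k" using wf by (simp add: wf_forest_def)
    ultimately show False using V k unfolding admissible_cut_def by metis
  qed
  then show "k \<in> {k \<in> LV F V. \<forall>x\<in>LV F V. \<not> descendant F k x}"
    using k by (simp add: LV_def)
next
  fix k assume "k \<in> {k \<in> LV F V. \<forall>x\<in>LV F V. \<not> descendant F k x}"
  then have k: "k \<in> LV F V" "\<forall>x\<in>LV F V. \<not> descendant F k x" by simp_all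
  show "k \<in> V"
  proof (rule ccontr)
    assume "k \<notin> V"
    then obtain v where "v \<in> V" "descendant F k v" using k(1) unfolding LV_def by blast
    then show False using k(2) by (simp add: LV_def)
  qed
qed

lemma LV_onto:
  assumes wf: "wf_forest F" and P: "child_closed F P"
  shows "\<exists>V. admissible_cut F V \<and> LV F V = P"
proof -
  define V where "V = {k \<in> P. \<forall>q. snd F k = Some q \<longrightarrow> q \<notin> P}"
  have VP: "V \<subseteq> P" by (auto simp: V_def)
  have "\<not> descendant F w v" if "v \<in> V" "w \<in> V" for v w
  proof
    assume "descendant F w v"
    then obtain q where q: "snd F w = Some q" "q = v \<or> descendant F q v" by (rule descendant_cases)
    then have "q \<in> P" using child_closed_descendant[OF P] VP \<open>v \<in> V\<close> by blast
    then show False using q(1) \<open>w \<in> V\<close> by (simp add: V_def)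
  qed
  moreover have "V \<subseteq> {1..fst F}" using VP P unfolding child_closed_def by blast
  ultimately have "admissible_cut F V" unfolding admissible_cut_def by blast
  moreover have "LV F V \<subseteq> P"
    using child_closed_descendant[OF P] VP unfolding LV_def by blast
  moreover have "k \<in> LV F V" if "k \<in> P" for k
    using that
  proof (induction k rule: wf_induct_rule[OF parent_relation_wf[OF wf]])
    case (1 k)
    show ?case
    proof (cases "k \<in> V")
      case False
      then obtain q where q: "snd F k = Some q" "q \<in> P" using "1.prems" by (auto simp: V_def)
      then have "q \<in> LV F V" using "1.IH" by (simp add: edges_def)
      then show ?thesis
        using descendant_parent[OF q(1)] descendant_trans[of F k q] unfolding LV_def by blast
    qed (simp add: LV_def)
  qed
  ultimately show ?thesis by blast
qed

lemma bij_betw_LV: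
  assumes wf: "wf_forest F"
  shows "bij_betw (LV F) {V. admissible_cut F V} {P. child_closed F P}"
proof (rule bij_betw_imageI)
  show "inj_on (LV F) {V. admissible_cut F V}"
  proof (rule inj_onI)
    fix V V' assume "V \<in> {V. admissible_cut F V}" "V' \<in> {V. admissible_cut F V}" "LV F V = LV F V'"
    then show "V = V'" using cut_from_LV[OF wf, of V] cut_from_LV[OF wf, of V'] by simp
  qed
  show "LV F ` {V. admissible_cut F V} = {P. child_closed F P}"
  proof (intro equalityI subsetI)
    fix P assume "P \<in> {P. child_closed F P}"
    then obtain V where "admissible_cut F V" "LV F V = P" using LV_onto[OF wf] by blast
    then show "P \<in> LV F ` {V. admissible_cut F V}" by blast
  qed (auto intro: LV_child_closed[OF wf])
qed

definition labels_ok ::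
  "('l \<Rightarrow> bool) \<Rightarrow> ('l \<Rightarrow> bool) \<Rightarrow> ('l \<Rightarrow> 'l \<Rightarrow> bool) \<Rightarrow> (nat \<Rightarrow> nat option) \<Rightarrow> nat set \<Rightarrow> (nat \<Rightarrow> 'l) \<Rightarrow> bool"
where
  "labels_ok letter diag prec p K x \<longleftrightarrow>
     (\<forall>k\<in>K. letter (x k) \<and> (p k = None \<longrightarrow> diag (x k)) \<and> (\<forall>q. p k = Some q \<longrightarrow> prec (x q) (x k)))"

lemma compatible_iff_labels_ok:
  "compatible letter diag prec F w \<longleftrightarrow>
     length w = fst F \<and> labels_ok letter diag prec (snd F) {1..fst F} (\<lambda>k. w ! (k - 1))"
proof -
  have "set w = (\<lambda>k. w ! (k - 1)) ` {1..length w}"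
  proof (intro equalityI subsetI)
    fix x assume "x \<in> set w"
    then obtain i where "i < length w" "x = w ! i" by (auto simp: in_set_conv_nth)
    then show "x \<in> (\<lambda>k. w ! (k - 1)) ` {1..length w}" by (intro image_eqI[where x = "Suc i"]) auto
  qed auto
  then have "(\<forall>x\<in>set w. letter x) \<longleftrightarrow> (\<forall>k\<in>{1..length w}. letter (w ! (k - 1)))" by simp
  then show ?thesis unfolding compatible_def labels_ok_def by auto
qed

lemma labels_ok_Un:
  "labels_ok letter diag prec p (A \<union> B) x \<longleftrightarrow>
     labels_ok letter diag prec p A x \<and> labels_ok letter diag prec p B x"
  by (auto simp: labels_ok_def)

lemma labels_ok_reindex:
  assumes par: "\<And>k. k \<in> K \<Longrightarrow> p' (f k) = map_option f (p k)"
    and closed: "\<And>k q. k \<in> K \<Longrightarrow> p k = Some q \<Longrightarrow> q \<in> K"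
    and lab: "\<And>k. k \<in> K \<Longrightarrow> y (f k) = x k"
  shows "labels_ok letter diag prec p' (f ` K) y \<longleftrightarrow> labels_ok letter diag prec p K x"
proof -
  have "(letter (y (f k)) \<and> (p' (f k) = None \<longrightarrow> diag (y (f k))) \<and>
          (\<forall>q. p' (f k) = Some q \<longrightarrow> prec (y q) (y (f k)))) \<longleftrightarrow>
        (letter (x k) \<and> (p k = None \<longrightarrow> diag (x k)) \<and> (\<forall>q. p k = Some q \<longrightarrow> prec (x q) (x k)))"
    if k: "k \<in> K" for k
  proof (cases "p k")
    case (Some q)
    then show ?thesis using par[OF k] lab[OF k] lab[OF closed[OF k Some]] by simp
  qed (use par[OF k] lab[OF k] in simp)
  then show ?thesis unfolding labels_ok_def by simp
qed

definition restrict_parent :: "(nat \<Rightarrow> nat option) \<Rightarrow> nat set \<Rightarrow> nat \<Rightarrow> nat option" where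
  "restrict_parent p I k = (case p k of None \<Rightarrow> None | Some q \<Rightarrow> if q \<in> I then Some q else None)"

lemma snd_restr_rank:
  assumes "finite I" "k \<in> I"
  shows "snd (restr F I) (rank I k) = map_option (rank I) (restrict_parent (snd F) I k)"
  using rank_bounds[OF assms] elem_at_rank[OF assms]
  by (simp add: restr_def restrict_parent_def split: option.split)

lemma compatible_restr:
  assumes "finite I"
  shows "compatible letter diag prec (restr F I) x \<longleftrightarrow>
     length x = card I \<and>
     labels_ok letter diag prec (restrict_parent (snd F) I) I (\<lambda>k. x ! (rank I k - 1))"
proof -
  have "labels_ok letter diag prec (snd (restr F I)) (rank I ` I) (\<lambda>j. x ! (j - 1)) \<longleftrightarrow>
        labels_ok letter diag prec (restrict_parent (snd F) I) I (\<lambda>k. x ! (rank I k - 1))"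
    by (rule labels_ok_reindex)
      (auto simp: snd_restr_rank[OF assms] restrict_parent_def split: option.splits if_splits)
  then show ?thesis
    unfolding compatible_iff_labels_ok rank_image[OF assms] by (simp add: restr_def)
qed

lemma compatible_fprod:
  assumes wfF: "wf_forest F" and wfG: "wf_forest G"
  shows "compatible letter diag prec (fprod F G) w \<longleftrightarrow>
    compatible letter diag prec F (take (fst F) w) \<and> compatible letter diag prec G (drop (fst F) w)"
proof (cases "length w = fst F + fst G")
  case True
  let ?ok = "labels_ok letter diag prec"
  define n where "n = fst F"
  have split: "{1..fst (fprod F G)} = id ` {1..n} \<union> (\<lambda>j. j + n) ` {1..fst G}"
    by (auto simp: fprod_def n_def)
  have "?ok (snd (fprod F G)) (id ` {1..n}) (\<lambda>k. w ! (k - 1)) \<longleftrightarrow>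
        ?ok (snd F) {1..n} (\<lambda>k. take n w ! (k - 1))"
    using wf_parent[OF wfF] True by (intro labels_ok_reindex) (auto simp: fprod_def n_def option.map_id)
  moreover have "?ok (snd (fprod F G)) ((\<lambda>j. j + n) ` {1..fst G}) (\<lambda>k. w ! (k - 1)) \<longleftrightarrow>
        ?ok (snd G) {1..fst G} (\<lambda>j. drop n w ! (j - 1))"
    using wf_parent[OF wfG] True
    by (intro labels_ok_reindex) (auto simp: fprod_def n_def add.commute nth_drop)
  ultimately show ?thesis
    unfolding compatible_iff_labels_ok split labels_ok_Un using True
    by (simp add: fprod_def n_def)
qed (auto simp: compatible_def fprod_def)

text \<open>Edges from C into P
  carry the relation a \<prec> b_ii, which amounts to the root condition of F restricted to P.\<close>

lemma labels_ok_sum_split: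
  assumes wf: "wf_forest F" and P: "child_closed F P"
    and y: "\<And>k. k \<in> {1..fst F} \<Longrightarrow> y k = (if k \<in> P then Inr (b k) else Inl (a k))"
  defines "C \<equiv> {1..fst F} - P"
  shows "labels_ok letterAB diagAB precAB (snd F) {1..fst F} y \<longleftrightarrow>
     labels_ok letterA diagA precA (restrict_parent (snd F) C) C a \<and>
     labels_ok letterA diagA precA (restrict_parent (snd F) P) P b"
proof -
  have par: "q \<in> {1..fst F}" if "snd F k = Some q" for k q using wf_parent[OF wf that] by simp
  have cl: "k \<in> P" if "snd F k = Some q" "q \<in> P" for k q
    using P that unfolding child_closed_def by blast
  have CP: "{1..fst F} = C \<union> P" using P unfolding C_def child_closed_def by blast
  have yC: "y k = Inl (a k)" if "k \<in> C" for k using that y[of k] by (simp add: C_def)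
  have yP: "y k = Inr (b k)" if "k \<in> P" for k using that y[of k] P by (auto simp: child_closed_def)
  have "labels_ok letterAB diagAB precAB (snd F) {k} y \<longleftrightarrow>
      labels_ok letterA diagA precA (restrict_parent (snd F) C) {k} a" if k: "k \<in> C" for k
  proof (cases "snd F k")
    case (Some q)
    then have "q \<in> C" using par cl k unfolding C_def by blast
    then show ?thesis using Some k yC by (simp add: labels_ok_def restrict_parent_def)
  qed (use k yC in \<open>simp add: labels_ok_def restrict_parent_def\<close>)
  moreover have "labels_ok letterAB diagAB precAB (snd F) {k} y \<longleftrightarrow>
      labels_ok letterA diagA precA (restrict_parent (snd F) P) {k} b" if k: "k \<in> P" for k
  proof (cases "snd F k")
    case (Some q)
    have "q \<in> C" if "q \<notin> P" using par[OF Some] that by (simp add: C_def)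
    then show ?thesis using Some k yC yP
      by (cases "q \<in> P") (simp_all add: labels_ok_def restrict_parent_def)
  qed (use k yP in \<open>simp add: labels_ok_def restrict_parent_def\<close>)
  ultimately show ?thesis
    unfolding CP(1) labels_ok_Un by (auto simp: labels_ok_def)
qed

lemma compatible_shuffle:
  assumes wf: "wf_forest F" and w: "w \<in> shuffles (map Inl u) (map Inr v)"
    and len: "length w = fst F"
  defines "P \<equiv> posset (\<lambda>x. \<not> isl x) w"
  assumes P: "child_closed F P"
  shows "compatible letterAB diagAB precAB F w \<longleftrightarrow>
     compatible letterA diagA precA (restr F ({1..fst F} - P)) u \<and>
     compatible letterA diagA precA (restr F P) v"
proof -
  have fin: "finite P" "finite ({1..fst F} - P)" by (simp_all add: P_def)
  have "labels_ok letterAB diagAB precAB (snd F) {1..fst F} (\<lambda>k. w ! (k - 1)) \<longleftrightarrow>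
     labels_ok letterA diagA precA (restrict_parent (snd F) ({1..fst F} - P)) ({1..fst F} - P)
       (\<lambda>k. u ! (rank ({1..fst F} - P) k - 1)) \<and>
     labels_ok letterA diagA precA (restrict_parent (snd F) P) P (\<lambda>k. v ! (rank P k - 1))"
    using nth_shuffle[OF w] len by (intro labels_ok_sum_split[OF wf P]) (simp add: P_def)
  then show ?thesis
    using shuffle_lengths[OF w] len
    unfolding compatible_restr[OF fin(1)] compatible_restr[OF fin(2)]
      compatible_iff_labels_ok[where F = F] by (simp add: P_def)
qed

text \<open>In a compatible word over A \<oplus> B the B-positions are child-closed, since no
  B-letter precedes an A-letter.\<close>

lemma compatible_child_closed:
  assumes wf: "wf_forest F" and c: "compatible letterAB diagAB precAB F w"
  shows "child_closed F (posset (\<lambda>x. \<not> isl x) w)"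
  unfolding child_closed_def
proof (intro conjI allI impI)
  have len: "length w = fst F" using c by (simp add: compatible_def)
  then show "posset (\<lambda>x. \<not> isl x) w \<subseteq> {1..fst F}" using posset_subset by metis
  fix l k assume e: "snd F l = Some k" and k: "k \<in> posset (\<lambda>x. \<not> isl x) w"
  have l: "l \<in> {1..fst F}" using wf_parent[OF wf e] by simp
  then have "precAB (w ! (k - 1)) (w ! (l - 1))" using c e by (simp add: compatible_def)
  moreover have "\<not> isl (w ! (k - 1))" using k by (simp add: posset_def)
  ultimately have "\<not> isl (w ! (l - 1))" by (cases "w ! (l - 1)"; cases "w ! (k - 1)") auto
  then show "l \<in> posset (\<lambda>x. \<not> isl x) w" using l len by (simp add: posset_def)
qed

lemma bij_betw_build:
  assumes wf: "wf_forest F"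
  shows "bij_betw (\<lambda>P. build (fst F) P u v)
     {P. child_closed F P \<and> compatible letterA diagA precA (restr F ({1..fst F} - P)) u
                          \<and> compatible letterA diagA precA (restr F P) v}
     {w \<in> shuffles (map Inl u) (map Inr v). compatible letterAB diagAB precAB F w}"
proof -
  let ?A = "{P. child_closed F P \<and> compatible letterA diagA precA (restr F ({1..fst F} - P)) u
                                \<and> compatible letterA diagA precA (restr F P) v}"
  let ?B = "{w \<in> shuffles (map Inl u) (map Inr v). compatible letterAB diagAB precAB F w}"
  have forward: "build (fst F) P u v \<in> ?B \<and> posset (\<lambda>x. \<not> isl x) (build (fst F) P u v) = P"
    if "P \<in> ?A" for P
  proof -
    from that have P: "child_closed F P"
      and cu: "compatible letterA diagA precA (restr F ({1..fst F} - P)) u"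
      and cv: "compatible letterA diagA precA (restr F P) v" by simp_all
    have Psub: "P \<subseteq> {1..fst F}" using P by (simp add: child_closed_def)
    have pos: "posset (\<lambda>x. \<not> isl x) (build (fst F) P u v) = P" by (rule posset_build[OF Psub])
    have sh: "build (fst F) P u v \<in> shuffles (map Inl u) (map Inr v)"
      using cu cv by (intro build_in_shuffles[OF Psub]) (simp_all add: compatible_def restr_def)
    have "compatible letterAB diagAB precAB F (build (fst F) P u v)"
      using compatible_shuffle[OF wf sh] P cu cv by (simp add: pos)
    then show ?thesis using sh pos by simp
  qed
  have backward: "posset (\<lambda>x. \<not> isl x) w \<in> ?A \<and> build (fst F) (posset (\<lambda>x. \<not> isl x) w) u v = w"
    if "w \<in> ?B" for w
  proof -
    from that have sh: "w \<in> shuffles (map Inl u) (map Inr v)"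
      and c: "compatible letterAB diagAB precAB F w" by simp_all
    have len: "length w = fst F" using c by (simp add: compatible_def)
    have cl: "child_closed F (posset (\<lambda>x. \<not> isl x) w)" by (rule compatible_child_closed[OF wf c])
    then show ?thesis
      using compatible_shuffle[OF wf sh len cl] c shuffle_eq_build[OF sh] len by simp
  qed
  show ?thesis
  proof (rule bij_betw_byWitness[where f' = "posset (\<lambda>x. \<not> isl x)"])
    show "\<forall>P\<in>?A. posset (\<lambda>x. \<not> isl x) (build (fst F) P u v) = P" using forward by simp
    show "\<forall>w\<in>?B. build (fst F) (posset (\<lambda>x. \<not> isl x) w) u v = w" using backward by simp
    show "(\<lambda>P. build (fst F) P u v) ` ?A \<subseteq> ?B" using forward by (intro image_subsetI) simp
    show "posset (\<lambda>x. \<not> isl x) ` ?B \<subseteq> ?A" using backward by (intro image_subsetI) simp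
  qed
qed

lemma sum_indicator: "finite A \<Longrightarrow> (\<Sum>x\<in>A. if P x then 1 else 0 :: nat) = card {x \<in> A. P x}"
  by (simp add: sum.inter_filter[symmetric])

lemma SAB_coproduct:
  assumes wf: "wf_forest F"
  shows "(\<Sum>w\<in>shuffles (map Inl u) (map Inr v). SAB F w) =
         (\<Sum>V\<in>{V. admissible_cut F V}. SA (Roo F V) u * SA (Lea F V) v)"
proof -
  let ?pairs = "\<lambda>P. compatible letterA diagA precA (restr F ({1..fst F} - P)) u
                   \<and> compatible letterA diagA precA (restr F P) v"
  have fin: "finite {P. child_closed F P}"
    by (rule finite_subset[of _ "Pow {1..fst F}"]) (auto simp: child_closed_def)
  have "(\<Sum>V\<in>{V. admissible_cut F V}. SA (Roo F V) u * SA (Lea F V) v) =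
        (\<Sum>P\<in>{P. child_closed F P}. SA (restr F ({1..fst F} - P)) u * SA (restr F P) v)"
    unfolding Roo_def Lea_def by (rule sum.reindex_bij_betw[OF bij_betw_LV[OF wf]])
  also have "\<dots> = (\<Sum>P\<in>{P. child_closed F P}. if ?pairs P then 1 else 0)"
    by (intro sum.cong) (simp_all add: SA_def)
  also have "\<dots> = card {P. child_closed F P \<and> ?pairs P}"
    using sum_indicator[OF fin, of ?pairs] by simp
  also have "\<dots> = card {w \<in> shuffles (map Inl u) (map Inr v). compatible letterAB diagAB precAB F w}"
    by (rule bij_betw_same_card[OF bij_betw_build[OF wf]])
  also have "\<dots> = (\<Sum>w\<in>shuffles (map Inl u) (map Inr v). SAB F w)"
    unfolding SAB_def by (rule sum_indicator[symmetric]) simp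
  finally show ?thesis ..
qed

text \<open>The product identity: in the concatenation product only the cut at position fst F
  contributes.\<close>

lemma SA_product:
  assumes wfF: "wf_forest F" and wfG: "wf_forest G"
  shows "ser_mult (SA F) (SA G) = SA (fprod F G)"
proof
  fix w :: "(nat \<times> nat) list"
  have "SA F (take k w) * SA G (drop k w) = 0" if "k \<le> length w" "k \<noteq> fst F" for k
    using that by (simp add: SA_def compatible_def)
  then have "ser_mult (SA F) (SA G) w =
      (\<Sum>k\<le>length w. if k = fst F then SA F (take k w) * SA G (drop k w) else 0)"
    unfolding ser_mult_def by (intro sum.cong) auto
  also have "\<dots> = (if fst F \<le> length w then SA F (take (fst F) w) * SA G (drop (fst F) w) else 0)"
    by (simp add: sum.delta)
  also have "\<dots> = SA (fprod F G) w"
  proof (cases "length w = fst F + fst G")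
    case True
    then show ?thesis using compatible_fprod[OF wfF wfG, of letterA diagA precA w] by (simp add: SA_def)
  next
    case False
    then have "fst F \<le> length w \<Longrightarrow> \<not> compatible letterA diagA precA G (drop (fst F) w)"
      "\<not> compatible letterA diagA precA (fprod F G) w"
      by (auto simp: compatible_def fprod_def)
    then show ?thesis by (simp add: SA_def)
  qed
  finally show "ser_mult (SA F) (SA G) w = SA (fprod F G) w" .
qed

theorem mainTheorem3:
  shows "(\<forall>F G. wf_forest F \<longrightarrow> wf_forest G \<longrightarrow>
            ser_mult (SA F) (SA G) = SA (fprod F G))
       \<and> (\<forall>F. wf_forest F \<longrightarrow> (\<forall>u v.
            (\<Sum>w\<in>shuffles (map Inl u) (map Inr v). SAB F w) =
            (\<Sum>V\<in>{V. admissible_cut F V}. SA (Roo F V) u * SA (Lea F V) v)))"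
  using SA_product SAB_coproduct by blast

end
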